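(* Let $\mathcal{U}$ and $\mathcal{V}$ be linear subspaces of $\mathbb{R}^n$ with $p := \dim \mathcal{U}$, $q := \dim\mathcal{V}$, $s := \dim(\mathcal{U}\cap\mathcal{V})$, and let $\alpha_1,\alpha_2\in\mathbb{R}$. Then the eigenvalues of $T = \Pi_{\mathcal{U}}^{\alpha_2}\Pi_{\mathcal{V}}^{\alpha_1}$ are $$\{1\}^s,\quad \{(1-\alpha_1)(1-\alpha_2)\}^{s+n-p-q},\quad \{1-\alpha_2\}^{\max(0,q-p)},\quad \{1-\alpha_1\}^{\max(0,p-q)},$$ together with $\lambda_i^{1}$ and $\lambda_i^{2}$ for every $i\in\{s+1,\dots,\min(p,q)\}$, where $$\lambda_i^{1,2} = \tfrac12\left(2-\alpha_1-\alpha_2+\alpha_1\alpha_2\cos^2\theta_i\right)\pm\sqrt{\tfrac14\left(2-\alpha_1-\alpha_2+\alpha_1\alpha_2\cos^2\theta_i\right)^2-(1-\alpha_1)(1-\alpha_2)},$$ and $\{\lambda\}^j$ denotes the eigenvalue $\lambda$ with (possibly zero) multiplicity $j$.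
   Context: For a closed nonempty set $C$, $\Pi_C$ is the (Euclidean) projection onto $C$ and the relaxed projection with parameter $\alpha$ is $\Pi_C^\alpha := (1-\alpha)I+\alpha\Pi_C$. The principal angles $\theta_1\le\theta_2\le\dots\le\theta_{\min(p,q)}$ in $[0,\pi/2]$ between $\mathcal{U}$ and $\mathcal{V}$ are defined recursively by $\cos\theta_k = \max\langle u_k,v_k\rangle$ over $u_k\in\mathcal{U}$, $v_k\in\mathcal{V}$ with $\|u_k\|=\|v_k\|=1$ and $\langle u_k,v_i\rangle=\langle u_i,v_k\rangle=0$ for $i=1,\dots,k-1$; exactly the first $s$ of them are zero. The square root may be complex. *)

theory Defs
  imports "HOL-Analysis.Analysis" "HOL-Computational_Algebra.Polynomial" "HOL-Library.Multiset"
begin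

definition proj :: "'a::euclidean_space set \<Rightarrow> 'a \<Rightarrow> 'a" where
  "proj C x = closest_point C x"

definition relaxed_proj :: "real \<Rightarrow> 'a::euclidean_space set \<Rightarrow> 'a \<Rightarrow> 'a" where
  "relaxed_proj \<alpha> C x = (1 - \<alpha>) *\<^sub>R x + \<alpha> *\<^sub>R proj C x"

definition charpoly :: "real^'n^'n \<Rightarrow> complex poly" where
  "charpoly A = det (\<chi> i j. (if i = j then [:0, 1:] else 0) - [:complex_of_real (A $ i $ j):])"

definition has_eigenvalues_mset :: "(real^'n \<Rightarrow> real^'n) \<Rightarrow> complex multiset \<Rightarrow> bool" where
  "has_eigenvalues_mset f M \<longleftrightarrow> charpoly (matrix f) = (\<Prod>l\<in>#M. [:- l, 1:])"

text \<open>Feasible pairs at step k (0-based) in the recursive definition of principal angles.\<close>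
definition principal_feasible ::
  "'a::euclidean_space set \<Rightarrow> 'a set \<Rightarrow> (nat \<Rightarrow> 'a) \<Rightarrow> (nat \<Rightarrow> 'a) \<Rightarrow> nat \<Rightarrow> ('a \<times> 'a) set" where
  "principal_feasible U V u v k =
     {(x, y). x \<in> U \<and> y \<in> V \<and> norm x = 1 \<and> norm y = 1 \<and>
              (\<forall>i<k. x \<bullet> v i = 0 \<and> u i \<bullet> y = 0)}"

definition principal_vectors ::
  "'a::euclidean_space set \<Rightarrow> 'a set \<Rightarrow> (nat \<Rightarrow> 'a) \<Rightarrow> (nat \<Rightarrow> 'a) \<Rightarrow> bool" where
  "principal_vectors U V u v \<longleftrightarrow>
     (\<forall>k < min (dim U) (dim V).
        (u k, v k) \<in> principal_feasible U V u v k \<and>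
        (\<forall>(x, y) \<in> principal_feasible U V u v k. x \<bullet> y \<le> u k \<bullet> v k))"

definition principal_angle :: "(nat \<Rightarrow> 'a::euclidean_space) \<Rightarrow> (nat \<Rightarrow> 'a) \<Rightarrow> nat \<Rightarrow> real" where
  "principal_angle u v k = arccos (u k \<bullet> v k)"

end

theory Submission
  imports Defs
begin

(*
  The recursive maximisation defining the principal vectors makes each principal pair stationary
  for the two projections: P_V u_k = cos(theta_k) v_k and P_U v_k = cos(theta_k) u_k. Hence the
  plane spanned by u_k and v_k is invariant under T, which acts on it by a 2x2 matrix of trace
  2 - alpha1 - alpha2 + alpha1 alpha2 cos^2(theta_k) and determinant (1 - alpha1)(1 - alpha2);
  its eigenvalues are lambda_k^1 and lambda_k^2. For theta_k = 0 the plane degenerates to the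
  line u_k = v_k in U /\ V, on which T is the identity. The planes with cos(theta_k) > 0 are
  mutually orthogonal, and the rest of R^n splits into the part of U orthogonal to them
  (eigenvalue 1 - alpha1), the corresponding part of V (eigenvalue 1 - alpha2) and the orthogonal
  complement of U + V (eigenvalue (1 - alpha1)(1 - alpha2)). A pair with cos(theta_k) = 0
  contributes one dimension to each of the first two, matching
  {lambda_k^1, lambda_k^2} = {1 - alpha1, 1 - alpha2}. Triangularising T over C block by block
  yields its characteristic polynomial.
*)

section \<open>Characteristic polynomials from triangularising bases\<close>

lemma det_upperdiagonal_inj:
  fixes M :: "'a::comm_ring_1^'n^'n" and g :: "'n \<Rightarrow> nat"
  assumes "inj g" and upper: "\<And>i j. g j < g i \<Longrightarrow> M$i$j = 0"
  shows "det M = (\<Prod>i\<in>UNIV. M$i$i)"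
proof -
  have descent: "\<exists>i. g (p i) < g i" if p: "p permutes UNIV" and "p \<noteq> id" for p
  proof (rule ccontr)
    assume "\<not> ?thesis"
    then have le: "g i \<le> g (p i)" for i by (simp add: not_less)
    have "(\<Sum>i\<in>UNIV. g i) = (\<Sum>i\<in>UNIV. g (p i))"
      using sum.permute[OF p, of g] by (simp add: comp_def)
    then have "g i = g (p i)" for i
      by (rule sum_mono_inv) (use le in auto)
    then have "p i = i" for i using \<open>inj g\<close> by (simp add: inj_eq)
    then have "p = id" by auto
    with \<open>p \<noteq> id\<close> show False ..
  qed
  have "(\<Prod>i\<in>UNIV. M$i$p i) = 0" if p: "p permutes UNIV" "p \<noteq> id" for p
  proof -
    obtain i where "g (p i) < g i" using descent[OF p] ..
    then have "M$i$p i = 0" by (rule upper)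
    then show ?thesis by (intro prod_zero) auto
  qed
  then have "(\<Sum>p\<in>{p. p permutes (UNIV::'n set)} - {id}. of_int (sign p) * (\<Prod>i\<in>UNIV. M$i$p i)) = 0"
    by (intro sum.neutral) auto
  moreover have "det M = of_int (sign (id::'n\<Rightarrow>'n)) * (\<Prod>i\<in>UNIV. M$i$id i) +
      (\<Sum>p\<in>{p. p permutes (UNIV::'n set)} - {id}. of_int (sign p) * (\<Prod>i\<in>UNIV. M$i$p i))"
    unfolding det_def by (rule sum.remove) (auto simp: permutes_id finite_permutations)
  ultimately show ?thesis by (simp add: sign_id)
qed

lemma const_poly_sum: "(\<Sum>x\<in>A. [:f x:]) = [:sum f A:]"
  by (induction A rule: infinite_finite_induct) auto

lemma const_poly_prod: "(\<Prod>x\<in>A. [:f x:]) = [:prod f A:]"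
  by (induction A rule: infinite_finite_induct) (auto simp: mult.commute)

definition poly_const_matrix :: "'a::comm_ring_1^'n^'m \<Rightarrow> 'a poly^'n^'m" where
  "poly_const_matrix P = (\<chi> i j. [:P $ i $ j:])"

definition char_matrix :: "'a::comm_ring_1^'n^'n \<Rightarrow> 'a poly^'n^'n" where
  "char_matrix B = mat [:0, 1:] - poly_const_matrix B"

lemma det_poly_const_matrix: "det (poly_const_matrix P) = [:det P:]"
proof -
  have "of_int k * [:c:] = [:of_int k * c:]" for k and c :: 'a
    by (simp add: of_int_poly)
  then show ?thesis
    unfolding det_def poly_const_matrix_def
    by (simp only: vec_lambda_beta const_poly_prod const_poly_sum)
qed

lemma poly_const_matrix_mult:
  "poly_const_matrix B ** poly_const_matrix P = poly_const_matrix (B ** P)"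
  by (simp add: poly_const_matrix_def matrix_matrix_mult_def vec_eq_iff const_poly_sum mult.commute)

lemma mat_diff_matrix_mult:
  "(mat a - M) ** N = (\<chi> i j. a * N $ i $ j) - M ** (N :: 'a::comm_ring_1^'n^'n)"
proof -
  have "(mat a - M) ** N = mat a ** N - M ** N"
    by (vector matrix_matrix_mult_def sum_subtractf[symmetric] field_simps)
  also have "mat a ** N = (\<chi> i j. a * N $ i $ j)"
    unfolding matrix_matrix_mult_def mat_def
    by (auto simp: if_distrib if_distribR sum.delta'[OF finite] cong: if_cong)
  finally show ?thesis .
qed

lemma matrix_mult_mat_diff:
  "N ** (mat a - M) = (\<chi> i j. N $ i $ j * a) - N ** (M :: 'a::comm_ring_1^'n^'n)"
proof -
  have "N ** (mat a - M) = N ** mat a - N ** M"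
    by (vector matrix_matrix_mult_def sum_subtractf[symmetric] field_simps)
  also have "N ** mat a = (\<chi> i j. N $ i $ j * a)"
    unfolding matrix_matrix_mult_def mat_def
    by (auto simp: if_distrib if_distribR sum.delta'[OF finite] cong: if_cong)
  finally show ?thesis .
qed

lemma det_char_matrix_similar:
  fixes B P Q :: "'a::idom^'n^'n"
  assumes "B ** P = P ** Q" and "det P \<noteq> 0"
  shows "det (char_matrix B) = det (char_matrix Q)"
proof -
  have "char_matrix B ** poly_const_matrix P = poly_const_matrix P ** char_matrix Q"
    unfolding char_matrix_def mat_diff_matrix_mult matrix_mult_mat_diff poly_const_matrix_mult assms(1)
    by (simp add: mult.commute)
  then have "det (char_matrix B) * [:det P:] = [:det P:] * det (char_matrix Q)"
    by (metis det_mul det_poly_const_matrix)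
  with assms(2) show ?thesis by (simp add: mult.commute smult_cancel)
qed

lemma vec_span_image_lessThan:
  fixes z :: "nat \<Rightarrow> 'a::field^'n"
  assumes "x \<in> vec.span (z ` {..<k})"
  shows "\<exists>t. x = (\<Sum>l<k. t l *s z l)"
  using assms
proof (induction k arbitrary: x)
  case 0
  then show ?case by simp
next
  case (Suc k)
  then obtain a where "x - a *s z k \<in> vec.span (z ` {..<k})"
    by (auto simp: lessThan_Suc vec.span_breakdown_eq)
  then obtain t where "x - a *s z k = (\<Sum>l<k. t l *s z l)"
    using Suc.IH by blast
  then have "x = (\<Sum>l<Suc k. (t(k := a)) l *s z l)"
    by (simp add: algebra_simps)
  then show ?case by blast
qed

lemma det_nonzero_if_span_columns:
  fixes P :: "'a::field^'n^'n"
  assumes "vec.span (columns P) = UNIV"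
  shows "det P \<noteq> 0"
proof -
  obtain B where "P ** B = mat 1"
    using assms matrix_right_invertible_span_columns by blast
  then have "det P * det B = 1" by (metis det_I det_mul)
  then show ?thesis by auto
qed

lemma triangular_basis_coefficients:
  fixes A :: "'a::field^'n^'n" and z :: "nat \<Rightarrow> 'a^'n"
  assumes "\<And>k. k < n \<Longrightarrow> A *v z k - d k *s z k \<in> vec.span (z ` {..<k})"
  obtains R where "\<And>k. k < n \<Longrightarrow> A *v z k = (\<Sum>l<n. R k l *s z l)"
    and "\<And>k. R k k = d k" and "\<And>k l. k < l \<Longrightarrow> R k l = 0"
proof -
  have "\<exists>t. A *v z k - d k *s z k = (\<Sum>l<k. t l *s z l)" if "k < n" for k
    using assms[OF that] by (rule vec_span_image_lessThan)
  then obtain t where t: "\<And>k. k < n \<Longrightarrow> A *v z k - d k *s z k = (\<Sum>l<k. t k l *s z l)"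
    by metis
  define R where "R k l = (if l = k then d k else if l < k then t k l else 0)" for k l
  have "A *v z k = (\<Sum>l<n. R k l *s z l)" if "k < n" for k
  proof -
    have "(\<Sum>l<n. R k l *s z l) = (\<Sum>l\<in>insert k {..<k}. R k l *s z l)"
      by (rule sum.mono_neutral_right) (use that in \<open>auto simp: R_def\<close>)
    also have "\<dots> = A *v z k"
      using t[OF that] by (simp add: R_def algebra_simps)
    finally show ?thesis by simp
  qed
  then show ?thesis by (rule that) (simp_all add: R_def)
qed

lemma det_char_matrix_triangular_basis:
  fixes A :: "'a::field^'n^'n" and z :: "nat \<Rightarrow> 'a^'n" and d :: "nat \<Rightarrow> 'a"
  assumes span: "vec.span (z ` {..<CARD('n)}) = UNIV"
    and tri: "\<And>k. k < CARD('n) \<Longrightarrow> A *v z k - d k *s z k \<in> vec.span (z ` {..<k})"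
  shows "det (char_matrix A) = (\<Prod>k<CARD('n). [:- d k, 1:])"
proof -
  define n where "n = CARD('n)"
  obtain g where g: "bij_betw g (UNIV::'n set) {..<n}"
    using ex_bij_betw_finite_nat[of "UNIV::'n set"] by (auto simp: n_def lessThan_atLeast0)
  have tri': "\<And>k. k < n \<Longrightarrow> A *v z k - d k *s z k \<in> vec.span (z ` {..<k})"
    using tri by (simp add: n_def)
  obtain R where Az: "\<And>k. k < n \<Longrightarrow> A *v z k = (\<Sum>l<n. R k l *s z l)"
    and R: "\<And>k. R k k = d k" "\<And>k l. k < l \<Longrightarrow> R k l = 0"
    using triangular_basis_coefficients[OF tri'] by blast
  define P :: "'a^'n^'n" where "P = (\<chi> i j. z (g j) $ i)"
  define Q :: "'a^'n^'n" where "Q = (\<chi> i j. R (g j) (g i))"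
  have "(A ** P) $ i $ j = (P ** Q) $ i $ j" for i j
  proof -
    have "g j < n" using g by (auto simp: bij_betw_def)
    have "(A ** P) $ i $ j = (A *v z (g j)) $ i"
      by (simp add: matrix_matrix_mult_def matrix_vector_mult_def P_def)
    also have "\<dots> = (\<Sum>l<n. R (g j) l * z l $ i)"
      by (simp add: Az[OF \<open>g j < n\<close>] sum_component)
    also have "\<dots> = (P ** Q) $ i $ j"
      using sum.reindex_bij_betw[OF g, of "\<lambda>l. R (g j) l * z l $ i"]
      by (simp add: matrix_matrix_mult_def P_def Q_def mult.commute)
    finally show ?thesis .
  qed
  then have "A ** P = P ** Q" by (simp add: vec_eq_iff)
  moreover have "columns P = z ` range g"
    by (auto simp: columns_def column_def P_def)
  then have "columns P = z ` {..<n}"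
    using g by (simp add: bij_betw_def)
  then have "det P \<noteq> 0"
    using span by (intro det_nonzero_if_span_columns) (simp add: n_def)
  ultimately have "det (char_matrix A) = det (char_matrix Q)"
    by (rule det_char_matrix_similar)
  also have "\<dots> = (\<Prod>i\<in>UNIV. char_matrix Q $ i $ i)"
    using g R by (intro det_upperdiagonal_inj)
      (auto simp: bij_betw_def char_matrix_def poly_const_matrix_def mat_def Q_def)
  also have "\<dots> = (\<Prod>k<n. [:- d k, 1:])"
    using prod.reindex_bij_betw[OF g, of "\<lambda>k. [:- d k, 1:]"] R
    by (simp add: char_matrix_def poly_const_matrix_def mat_def Q_def)
  finally show ?thesis by (simp add: n_def)
qed

definition triangularizes :: "'a::field^'n^'n \<Rightarrow> (('a^'n) \<times> 'a) list \<Rightarrow> bool" where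
  "triangularizes A zs \<longleftrightarrow>
     (\<forall>k<length zs. A *v fst (zs ! k) - snd (zs ! k) *s fst (zs ! k) \<in> vec.span (fst ` set (take k zs)))"

lemma triangularizes_append:
  assumes "triangularizes A xs" and "triangularizes A ys"
  shows "triangularizes A (xs @ ys)"
  unfolding triangularizes_def
proof (intro allI impI)
  fix k assume k: "k < length (xs @ ys)"
  show "A *v fst ((xs @ ys) ! k) - snd ((xs @ ys) ! k) *s fst ((xs @ ys) ! k)
        \<in> vec.span (fst ` set (take k (xs @ ys)))"
  proof (cases "k < length xs")
    case True
    then show ?thesis using assms(1) by (simp add: triangularizes_def nth_append)
  next
    case False
    then have "A *v fst ((xs @ ys) ! k) - snd ((xs @ ys) ! k) *s fst ((xs @ ys) ! k)
        \<in> vec.span (fst ` set (take (k - length xs) ys))"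
      using assms(2) k by (simp add: triangularizes_def nth_append)
    also have "\<dots> \<subseteq> vec.span (fst ` set (take k (xs @ ys)))"
      by (intro vec.span_mono image_mono) auto
    finally show ?thesis .
  qed
qed

lemma triangularizes_concat:
  "(\<And>xs. xs \<in> set xss \<Longrightarrow> triangularizes A xs) \<Longrightarrow> triangularizes A (concat xss)"
  by (induction xss) (auto simp: triangularizes_append, simp add: triangularizes_def)

lemma triangularizes_eigenvectors:
  "(\<And>z l. (z, l) \<in> set zs \<Longrightarrow> A *v z = l *s z) \<Longrightarrow> triangularizes A zs"
  unfolding triangularizes_def by (metis diff_self nth_mem prod.collapse vec.span_zero)

lemma triangularizes_pair:
  assumes "A *v z1 = l1 *s z1" and "A *v z2 = l2 *s z2 + \<mu> *s z1"
  shows "triangularizes A [(z1, l1), (z2, l2)]"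
  unfolding triangularizes_def using assms
  by (auto simp: less_Suc_eq nth_Cons' vec.span_zero vec.span_scale vec.span_base)

lemma det_char_matrix_triangularizes:
  fixes A :: "'a::field^'n^'n"
  assumes "length zs = CARD('n)" and "vec.span (fst ` set zs) = UNIV" and "triangularizes A zs"
  shows "det (char_matrix A) = (\<Prod>l\<in>#mset (map snd zs). [:- l, 1:])"
proof -
  have prefix: "fst ` set (take k zs) = (\<lambda>i. fst (zs ! i)) ` {..<k}" if "k \<le> length zs" for k
    by (simp add: nth_image[OF that, symmetric] image_image lessThan_atLeast0)
  have "det (char_matrix A) = (\<Prod>k<CARD('n). [:- snd (zs ! k), 1:])"
  proof (rule det_char_matrix_triangular_basis)
    show "vec.span ((\<lambda>i. fst (zs ! i)) ` {..<CARD('n)}) = UNIV"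
      using assms(1,2) prefix[of "length zs"] by simp
    show "A *v fst (zs ! k) - snd (zs ! k) *s fst (zs ! k) \<in> vec.span ((\<lambda>i. fst (zs ! i)) ` {..<k})"
      if "k < CARD('n)" for k
      using assms(1,3) that by (simp add: triangularizes_def prefix[symmetric])
  qed
  also have "\<dots> = prod_list (map (\<lambda>p. [:- snd p, 1:]) zs)"
    by (simp add: prod.list_conv_set_nth assms(1) lessThan_atLeast0)
  also have "\<dots> = (\<Prod>l\<in>#mset (map snd zs). [:- l, 1:])"
    by (simp flip: prod_mset_prod_list add: image_mset.compositionality o_def)
  finally show ?thesis .
qed

lemma triangularizes_coupled_plane:
  fixes A :: "'a::field^'n^'n"
  assumes Ax: "A *v x = a *s x + d *s y" and Ay: "A *v y = b *s x + e *s y" and "b \<noteq> 0"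
    and sum: "l1 + l2 = a + e" and prod: "l1 * l2 = a * e - b * d"
  shows "\<exists>zs. triangularizes A zs \<and> map snd zs = [l1, l2] \<and> {x, y} \<subseteq> vec.span (fst ` set zs)"
proof -
  have l2: "l2 = a + e - l1" using sum by (simp add: algebra_simps)
  define z where "z = b *s x + (l1 - a) *s y"
  have "A *v z = (b * a + (l1 - a) * b) *s x + (b * d + (l1 - a) * e) *s y"
    by (simp add: z_def Ax Ay matrix_vector_right_distrib vector_scalar_commute vec_eq_iff algebra_simps)
  also have "\<dots> = (l1 * b) *s x + (l1 * (l1 - a)) *s y"
  proof -
    have "b * d = (l1 - a) * (l1 - e)"
      using prod unfolding l2 by (simp add: algebra_simps)
    then have "b * d + (l1 - a) * e = l1 * (l1 - a)"
      by (simp add: algebra_simps)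
    moreover have "b * a + (l1 - a) * b = l1 * b"
      by (simp add: algebra_simps)
    ultimately show ?thesis by simp
  qed
  also have "\<dots> = l1 *s z"
    by (simp add: z_def vec_eq_iff algebra_simps)
  finally have "A *v z = l1 *s z" .
  moreover have "A *v y = l2 *s y + 1 *s z"
    by (simp add: Ay z_def l2 vec_eq_iff algebra_simps)
  ultimately have "triangularizes A [(z, l1), (y, l2)]"
    by (rule triangularizes_pair)
  moreover have "x = (1 / b) *s z - ((l1 - a) / b) *s y"
    using \<open>b \<noteq> 0\<close> by (simp add: z_def vec_eq_iff field_simps)
  then have "x \<in> vec.span {z, y}"
    by (metis insertCI vec.span_base vec.span_diff vec.span_scale)
  ultimately show ?thesis
    by (intro exI[of _ "[(z, l1), (y, l2)]"]) (auto intro: vec.span_base)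
qed

lemma triangularizes_invariant_plane:
  fixes A :: "'a::field^'n^'n"
  assumes Ax: "A *v x = a *s x + d *s y" and Ay: "A *v y = b *s x + e *s y"
    and sum: "l1 + l2 = a + e" and prod: "l1 * l2 = a * e - b * d"
  shows "\<exists>zs. triangularizes A zs \<and> map snd zs = [l1, l2] \<and> {x, y} \<subseteq> vec.span (fst ` set zs)"
proof -
  consider "b \<noteq> 0" | "d \<noteq> 0" | "b = 0" "d = 0"
    by blast
  then show ?thesis
  proof cases
    case 1
    then show ?thesis using triangularizes_coupled_plane[OF assms(1,2) _ assms(3,4)] by blast
  next
    case 2
    have "A *v y = e *s y + b *s x" "A *v x = d *s y + a *s x"
      using Ax Ay by (simp_all add: add.commute)
    moreover have "l1 + l2 = e + a" "l1 * l2 = e * a - d * b"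
      using sum prod by (simp_all add: algebra_simps)
    ultimately have "\<exists>zs. triangularizes A zs \<and> map snd zs = [l1, l2] \<and> {y, x} \<subseteq> vec.span (fst ` set zs)"
      by (rule triangularizes_coupled_plane[OF _ _ 2])
    then show ?thesis by (simp add: insert_commute)
  next
    case 3
    have l2: "l2 = a + e - l1" using sum by (simp add: algebra_simps)
    have "(l1 - a) * (l1 - e) = 0"
      using prod 3 unfolding l2 by (simp add: algebra_simps)
    then have "l1 = a \<or> l1 = e" by simp
    then consider "l1 = a" "l2 = e" | "l1 = e" "l2 = a"
      using l2 by auto
    then show ?thesis
    proof cases
      case 1
      then have "triangularizes A [(x, l1), (y, l2)]"
        using Ax Ay 3 by (intro triangularizes_eigenvectors) auto
      then show ?thesis
        by (intro exI[of _ "[(x, l1), (y, l2)]"]) (auto intro: vec.span_base)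
    next
      case 2
      then have "triangularizes A [(y, l1), (x, l2)]"
        using Ax Ay 3 by (intro triangularizes_eigenvectors) auto
      then show ?thesis
        by (intro exI[of _ "[(y, l1), (x, l2)]"]) (auto intro: vec.span_base)
    qed
  qed
qed

section \<open>Complexification\<close>

definition complex_matrix :: "real^'n^'m \<Rightarrow> complex^'n^'m" where
  "complex_matrix A = (\<chi> i j. complex_of_real (A $ i $ j))"

definition complex_vector :: "real^'n \<Rightarrow> complex^'n" where
  "complex_vector x = (\<chi> i. complex_of_real (x $ i))"

lemma charpoly_eq_det_char_matrix: "charpoly A = det (char_matrix (complex_matrix A))"
  unfolding charpoly_def char_matrix_def poly_const_matrix_def complex_matrix_def
  by (intro arg_cong[where f=det]) (simp add: mat_def vec_eq_iff)

lemma complex_vector_add [simp]: "complex_vector (x + y) = complex_vector x + complex_vector y"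
  and complex_vector_scaleR [simp]: "complex_vector (a *\<^sub>R x) = complex_of_real a *s complex_vector x"
  and complex_vector_0 [simp]: "complex_vector 0 = 0"
  by (simp_all add: complex_vector_def vec_eq_iff)

lemma complex_matrix_mult_complex_vector:
  "complex_matrix M *v complex_vector x = complex_vector (M *v x)"
  by (simp add: complex_matrix_def complex_vector_def matrix_vector_mult_def vec_eq_iff)

lemma subspace_complex_vector_preimage: "subspace {x. complex_vector x \<in> vec.span Z}"
  unfolding subspace_def by (auto simp: vec.span_zero vec.span_add vec.span_scale)

lemma vec_span_eq_UNIV_if_complex_vectors:
  assumes "\<And>x. complex_vector x \<in> vec.span Z"
  shows "vec.span Z = UNIV"
proof -
  have "z = complex_vector (\<chi> i. Re (z $ i)) + \<i> *s complex_vector (\<chi> i. Im (z $ i))" for z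
    by (simp add: complex_vector_def vec_eq_iff complex_eq_iff)
  then have "z \<in> vec.span Z" for z
    by (metis assms vec.span_add vec.span_scale)
  then show ?thesis by auto
qed

lemma triangularizes_eigenbasis_exists:
  fixes S :: "(real^'n) set" and A :: "complex^'n^'n"
  assumes "subspace S" and eig: "\<And>x. x \<in> S \<Longrightarrow> A *v complex_vector x = complex_of_real l *s complex_vector x"
  shows "\<exists>zs. triangularizes A zs \<and> map snd zs = replicate (dim S) (complex_of_real l) \<and>
           complex_vector ` S \<subseteq> vec.span (fst ` set zs)"
proof -
  obtain B where B: "B \<subseteq> S" "independent B" "S \<subseteq> span B" "card B = dim S"
    using basis_exists[of S] by blast
  obtain bs where bs: "set bs = B" "distinct bs"
    using finite_distinct_list[OF independent_imp_finite[OF B(2)]] by blast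
  define zs where "zs = map (\<lambda>x. (complex_vector x, complex_of_real l)) bs"
  have "triangularizes A zs"
    using B(1) bs(1) eig by (intro triangularizes_eigenvectors) (auto simp: zs_def)
  moreover have "map snd zs = replicate (dim S) (complex_of_real l)"
    using bs B(4) distinct_card[OF bs(2)] by (simp add: zs_def o_def map_replicate_const)
  moreover have "B \<subseteq> {x. complex_vector x \<in> vec.span (fst ` set zs)}"
    using bs(1) by (auto simp: zs_def image_image intro: vec.span_base)
  then have "complex_vector ` S \<subseteq> vec.span (fst ` set zs)"
    using B(3) span_minimal[OF _ subspace_complex_vector_preimage] by blast
  ultimately show ?thesis by blast
qed

section \<open>Orthogonal projections and orthonormal families\<close>

lemma proj_in:
  fixes S :: "'a::euclidean_space set"
  assumes "subspace S"
  shows "proj S x \<in> S"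
proof -
  have "closed S" and "S \<noteq> {}"
    using assms closed_subspace subspace_0 by auto
  then show ?thesis unfolding proj_def by (rule closest_point_in_set)
qed

lemma proj_residual_orthogonal:
  fixes S :: "'a::euclidean_space set"
  assumes S: "subspace S" and "y \<in> S"
  shows "(x - proj S x) \<bullet> y = 0"
proof -
  let ?p = "proj S x"
  have le: "(x - ?p) \<bullet> (w - ?p) \<le> 0" if "w \<in> S" for w
    using closest_point_dot[OF subspace_imp_convex[OF S] closed_subspace[OF S] that, of x]
    by (simp add: proj_def)
  have "(x - ?p) \<bullet> ((?p + y) - ?p) \<le> 0" "(x - ?p) \<bullet> ((?p - y) - ?p) \<le> 0"
    by (rule le, use assms proj_in[OF S] in \<open>simp add: subspace_add subspace_diff\<close>)+
  then show ?thesis by (simp add: inner_diff_right)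
qed

lemma proj_eqI:
  fixes S :: "'a::euclidean_space set"
  assumes S: "subspace S" and "p \<in> S" and orth: "\<And>y. y \<in> S \<Longrightarrow> (x - p) \<bullet> y = 0"
  shows "proj S x = p"
proof -
  have "dist x p \<le> dist x z" if "z \<in> S" for z
  proof -
    have "p - z \<in> S" using S \<open>p \<in> S\<close> that subspace_diff by blast
    then have "(norm (x - z))\<^sup>2 = (norm (x - p))\<^sup>2 + (norm (p - z))\<^sup>2"
      using orth norm_add_Pythagorean[of "x - p" "p - z"] by (simp add: orthogonal_def)
    then have "(norm (x - p))\<^sup>2 \<le> (norm (x - z))\<^sup>2" by simp
    then show ?thesis by (simp add: dist_norm power2_le_iff_abs_le)
  qed
  then show ?thesis
    unfolding proj_def
    by (intro closest_point_unique[symmetric] subspace_imp_convex closed_subspace S \<open>p \<in> S\<close>) auto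
qed

lemma proj_of_mem: "subspace S \<Longrightarrow> x \<in> S \<Longrightarrow> proj S x = (x::'a::euclidean_space)"
  by (rule proj_eqI) auto

lemma proj_eq_0_if_orthogonal:
  fixes S :: "'a::euclidean_space set"
  assumes "subspace S" and "\<And>y. y \<in> S \<Longrightarrow> x \<bullet> y = 0"
  shows "proj S x = 0"
  using assms by (intro proj_eqI) (auto simp: subspace_0)

lemma inner_proj_left:
  fixes S :: "'a::euclidean_space set"
  assumes "subspace S" and "y \<in> S"
  shows "proj S x \<bullet> y = x \<bullet> y"
  using proj_residual_orthogonal[OF assms, of x] by (simp add: inner_diff_left)

lemma inner_proj_commute:
  fixes S :: "'a::euclidean_space set"
  assumes "subspace S"
  shows "proj S x \<bullet> y = x \<bullet> proj S y"
  using inner_proj_left[OF assms proj_in[OF assms], of x y] inner_proj_left[OF assms proj_in[OF assms], of y x]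
  by (simp add: inner_commute)

lemma linear_proj:
  fixes S :: "'a::euclidean_space set"
  assumes S: "subspace S"
  shows "linear (proj S)"
proof
  fix x y
  show "proj S (x + y) = proj S x + proj S y"
  proof (rule proj_eqI[OF S])
    show "proj S x + proj S y \<in> S" by (simp add: S proj_in subspace_add)
    fix z assume "z \<in> S"
    then show "(x + y - (proj S x + proj S y)) \<bullet> z = 0"
      using proj_residual_orthogonal[OF S, of z x] proj_residual_orthogonal[OF S, of z y]
      by (simp add: algebra_simps inner_diff_left inner_add_left)
  qed
next
  fix c x
  show "proj S (c *\<^sub>R x) = c *\<^sub>R proj S x"
  proof (rule proj_eqI[OF S])
    show "c *\<^sub>R proj S x \<in> S" by (simp add: S proj_in subspace_scale)
    fix z assume "z \<in> S"
    then show "(c *\<^sub>R x - c *\<^sub>R proj S x) \<bullet> z = 0"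
      using proj_residual_orthogonal[OF S, of z x]
      by (simp add: inner_diff_left flip: scaleR_diff_right)
  qed
qed

lemmas proj_add = linear_add[OF linear_proj]
lemmas proj_scaleR = linear_scale[OF linear_proj]
lemmas proj_diff = linear_diff[OF linear_proj]
lemmas proj_zero = linear_0[OF linear_proj]

lemma eq_scaleR_if_norm_le_inner:
  fixes y w :: "'a::real_inner"
  assumes "norm y \<le> a" and "a \<le> y \<bullet> w" and "norm w = 1"
  shows "y = a *\<^sub>R w"
proof -
  have "0 \<le> a" using assms(1) norm_ge_zero order_trans by blast
  then have "y \<bullet> y \<le> a\<^sup>2" and "a * a \<le> a * (y \<bullet> w)"
    using assms(1,2) by (auto simp: power2_norm_eq_inner[symmetric] power_mono mult_left_mono)
  moreover have "w \<bullet> w = 1" using assms(3) by (simp add: norm_eq_1)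
  ultimately have "(y - a *\<^sub>R w) \<bullet> (y - a *\<^sub>R w) \<le> 0"
    by (simp add: inner_diff_left inner_diff_right inner_commute power2_eq_square algebra_simps)
  then have "(y - a *\<^sub>R w) \<bullet> (y - a *\<^sub>R w) = 0"
    using inner_ge_zero[of "y - a *\<^sub>R w"] by linarith
  then show ?thesis by simp
qed

lemma proj_eq_scaleR_if_maximizer:
  fixes S C :: "'a::euclidean_space set"
  assumes S: "subspace S" and C: "subspace C" and w: "w \<in> S" "norm w = 1"
    and "proj S x \<in> C"
    and max: "\<And>y. y \<in> S \<Longrightarrow> y \<in> C \<Longrightarrow> norm y = 1 \<Longrightarrow> x \<bullet> y \<le> x \<bullet> w"
  shows "proj S x = (x \<bullet> w) *\<^sub>R w"
proof (rule eq_scaleR_if_norm_le_inner)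
  let ?p = "proj S x"
  have xp: "x \<bullet> ?p = ?p \<bullet> ?p"
    using inner_proj_left[OF S proj_in[OF S], of x] by (simp add: inner_commute)
  show "x \<bullet> w \<le> ?p \<bullet> w"
    using inner_proj_left[OF S w(1)] by simp
  show "norm ?p \<le> x \<bullet> w"
  proof (cases "?p = 0")
    case True
    then show ?thesis using inner_proj_left[OF S w(1), of x] by simp
  next
    case False
    have "x \<bullet> (?p /\<^sub>R norm ?p) \<le> x \<bullet> w"
      using False by (intro max subspace_scale S C proj_in \<open>?p \<in> C\<close>) auto
    moreover have "x \<bullet> (?p /\<^sub>R norm ?p) = norm ?p"
      using False xp by (simp add: power2_norm_eq_inner[symmetric] power2_eq_square)
    ultimately show ?thesis by simp
  qed
qed (use w in simp)

definition orthonormal_upto :: "nat \<Rightarrow> (nat \<Rightarrow> 'a::real_inner) \<Rightarrow> bool" where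
  "orthonormal_upto k f \<longleftrightarrow>
     (\<forall>i<k. norm (f i) = 1) \<and> (\<forall>i<k. \<forall>j<k. i \<noteq> j \<longrightarrow> f i \<bullet> f j = 0)"

lemma orthonormal_upto_mono: "orthonormal_upto k f \<Longrightarrow> j \<le> k \<Longrightarrow> orthonormal_upto j f"
  by (auto simp: orthonormal_upto_def)

lemma orthonormal_upto_Suc:
  assumes "orthonormal_upto k f" and "norm x = 1" and "\<And>i. i < k \<Longrightarrow> x \<bullet> f i = 0"
  shows "orthonormal_upto (Suc k) (f(k := x))"
  using assms by (auto simp: orthonormal_upto_def less_Suc_eq inner_commute)

lemma
  fixes f :: "nat \<Rightarrow> 'a::euclidean_space"
  assumes "orthonormal_upto k f"
  shows independent_orthonormal_upto: "independent (f ` {..<k})"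
    and card_orthonormal_upto: "card (f ` {..<k}) = k"
proof -
  have n1: "\<And>i. i < k \<Longrightarrow> norm (f i) = 1"
    and orth: "\<And>i j. i < k \<Longrightarrow> j < k \<Longrightarrow> i \<noteq> j \<Longrightarrow> f i \<bullet> f j = 0"
    using assms by (auto simp: orthonormal_upto_def)
  have "inj_on f {..<k}"
  proof (rule inj_onI)
    fix i j assume "i \<in> {..<k}" "j \<in> {..<k}" "f i = f j"
    then show "i = j" using n1[of i] orth[of i j] by (auto simp: norm_eq_1)
  qed
  then show "card (f ` {..<k}) = k" by (simp add: card_image)
  show "independent (f ` {..<k})"
  proof (rule pairwise_orthogonal_independent)
    show "pairwise orthogonal (f ` {..<k})"
      unfolding pairwise_def orthogonal_def using orth by auto
    show "0 \<notin> f ` {..<k}" using n1 by force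
  qed
qed

lemma dim_span_orthonormal_upto:
  fixes f :: "nat \<Rightarrow> 'a::euclidean_space"
  assumes "orthonormal_upto k f"
  shows "dim (span (f ` {..<k})) = k"
  using dim_eq_card_independent[OF independent_orthonormal_upto[OF assms]] card_orthonormal_upto[OF assms]
  by simp

lemma orthonormal_upto_le_dim:
  fixes f :: "nat \<Rightarrow> 'a::euclidean_space"
  assumes "orthonormal_upto k f" and "\<And>i. i < k \<Longrightarrow> f i \<in> S"
  shows "k \<le> dim S"
  using independent_card_le_dim[OF _ independent_orthonormal_upto[OF assms(1)]] assms(2)
    card_orthonormal_upto[OF assms(1)] by auto

lemma inner_sum_orthonormal_upto:
  fixes f :: "nat \<Rightarrow> 'a::euclidean_space"
  assumes "orthonormal_upto k f" and "j < k"
  shows "(\<Sum>i<k. a i *\<^sub>R f i) \<bullet> f j = a j"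
proof -
  have "(\<Sum>i<k. a i *\<^sub>R f i) \<bullet> f j = (\<Sum>i<k. if i = j then a j else 0)"
    unfolding inner_sum_left
  proof (rule sum.cong)
    fix i assume "i \<in> {..<k}"
    then show "a i *\<^sub>R f i \<bullet> f j = (if i = j then a j else 0)"
      using assms unfolding orthonormal_upto_def by (auto simp: norm_eq_1)
  qed simp
  then show ?thesis using assms(2) by simp
qed

lemma orthonormal_residual_in_complement:
  fixes f :: "nat \<Rightarrow> 'a::euclidean_space"
  assumes S: "subspace S" and f: "orthonormal_upto k f" "\<And>i. i < k \<Longrightarrow> f i \<in> S" and "x \<in> S"
  shows "x - (\<Sum>i<k. (x \<bullet> f i) *\<^sub>R f i) \<in> {y \<in> S. \<forall>z\<in>span (f ` {..<k}). orthogonal z y}"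
proof -
  let ?x' = "x - (\<Sum>i<k. (x \<bullet> f i) *\<^sub>R f i)"
  have "?x' \<in> S"
    using assms by (intro subspace_diff[OF S] subspace_sum[OF S] subspace_scale[OF S]) auto
  moreover have "orthogonal ?x' z" if "z \<in> span (f ` {..<k})" for z
  proof (rule orthogonal_to_span[OF that])
    fix y assume "y \<in> f ` {..<k}"
    then obtain j where "j < k" "y = f j" by auto
    then show "orthogonal ?x' y"
      using inner_sum_orthonormal_upto[OF f(1) \<open>j < k\<close>, of "\<lambda>i. x \<bullet> f i"]
      by (simp add: orthogonal_def inner_diff_left)
  qed
  ultimately show ?thesis by (auto simp: orthogonal_commute)
qed

section \<open>Principal vectors\<close>

locale principal_vector_system =
  fixes U V :: "'a::euclidean_space set" and u v :: "nat \<Rightarrow> 'a"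
  assumes subspace_U: "subspace U" and subspace_V: "subspace V"
    and principal: "principal_vectors U V u v"
begin

abbreviation m :: nat where "m \<equiv> min (dim U) (dim V)"

definition cosine :: "nat \<Rightarrow> real" where "cosine k = u k \<bullet> v k"

lemma uv_feasible:
  assumes "k < m"
  shows "u k \<in> U" "v k \<in> V" "norm (u k) = 1" "norm (v k) = 1"
    "\<And>i. i < k \<Longrightarrow> u k \<bullet> v i = 0" "\<And>i. i < k \<Longrightarrow> u i \<bullet> v k = 0"
  using principal assms unfolding principal_vectors_def principal_feasible_def by auto

lemma inner_le_cosine:
  assumes "k < m" "x \<in> U" "y \<in> V" "norm x = 1" "norm y = 1"
    "\<And>i. i < k \<Longrightarrow> x \<bullet> v i = 0" "\<And>i. i < k \<Longrightarrow> u i \<bullet> y = 0"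
  shows "x \<bullet> y \<le> cosine k"
proof -
  have "(x, y) \<in> principal_feasible U V u v k"
    using assms unfolding principal_feasible_def by auto
  then show ?thesis
    using principal assms(1) unfolding principal_vectors_def cosine_def by fastforce
qed

lemma cosine_nonneg: "k < m \<Longrightarrow> 0 \<le> cosine k"
  using inner_le_cosine[of k "u k" "- v k"] uv_feasible[of k] subspace_V
  by (auto simp: subspace_neg cosine_def)

lemma cosine_le_1: "k < m \<Longrightarrow> cosine k \<le> 1"
  using norm_cauchy_schwarz[of "u k" "v k"] uv_feasible[of k] by (simp add: cosine_def)

lemma cosine_antimono: "j \<le> k \<Longrightarrow> k < m \<Longrightarrow> cosine k \<le> cosine j"
  using inner_le_cosine[of j "u k" "v k"] uv_feasible[of k] by (simp add: cosine_def)

lemma u_orth_v: "i < m \<Longrightarrow> j < m \<Longrightarrow> i \<noteq> j \<Longrightarrow> u i \<bullet> v j = 0"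
  using uv_feasible[of i] uv_feasible[of j] by (cases "i < j") auto

text \<open>By induction on k: the earlier pairs are already stationary, so projecting u k onto V keeps
  it orthogonal to the earlier u i; maximality of (u k, v k) then forces the projection to be
  parallel to v k.\<close>
lemma proj_principal_vectors:
  assumes "k < m"
  shows "proj V (u k) = cosine k *\<^sub>R v k" and "proj U (v k) = cosine k *\<^sub>R u k"
proof -
  have "proj V (u k) = cosine k *\<^sub>R v k \<and> proj U (v k) = cosine k *\<^sub>R u k"
    using assms
  proof (induction k rule: less_induct)
    case (less k)
    note f = uv_feasible[OF less.prems]
    have IH: "proj V (u i) = cosine i *\<^sub>R v i" "proj U (v i) = cosine i *\<^sub>R u i" if "i < k" for i
      using less that by auto
    let ?Cu = "{y. \<forall>i<k. u i \<bullet> y = 0}" and ?Cv = "{x. \<forall>i<k. x \<bullet> v i = 0}"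
    have sub: "subspace ?Cu" "subspace ?Cv"
      by (auto simp: subspace_def inner_add_right inner_add_left)
    have "u i \<bullet> proj V (u k) = 0" if "i < k" for i
    proof -
      have "u i \<bullet> proj V (u k) = cosine i * (v i \<bullet> u k)"
        using IH(1)[OF that] inner_proj_commute[OF subspace_V, of "u i" "u k"] by simp
      then show ?thesis using f(5)[OF that] by (simp add: inner_commute)
    qed
    then have "proj V (u k) \<in> ?Cu" by simp
    then have PV: "proj V (u k) = (u k \<bullet> v k) *\<^sub>R v k"
      using less.prems f
      by (intro proj_eq_scaleR_if_maximizer[OF subspace_V sub(1)])
        (auto intro!: inner_le_cosine[unfolded cosine_def])
    have "proj U (v k) \<bullet> v i = 0" if "i < k" for i
    proof -
      have "proj U (v k) \<bullet> v i = cosine i * (v k \<bullet> u i)"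
        using IH(2)[OF that] inner_proj_commute[OF subspace_U, of "v k" "v i"] by simp
      then show ?thesis using f(6)[OF that] by (simp add: inner_commute)
    qed
    then have "proj U (v k) \<in> ?Cv" by simp
    moreover have "v k \<bullet> x \<le> v k \<bullet> u k" if "x \<in> U" "x \<in> ?Cv" "norm x = 1" for x
      using inner_le_cosine[OF less.prems that(1) f(2) that(3) f(4)] that(2) f(6)
      by (simp add: cosine_def inner_commute)
    ultimately have PU: "proj U (v k) = (v k \<bullet> u k) *\<^sub>R u k"
      using f by (intro proj_eq_scaleR_if_maximizer[OF subspace_U sub(2)]) auto
    from PV PU show ?case by (simp add: cosine_def inner_commute)
  qed
  then show "proj V (u k) = cosine k *\<^sub>R v k" and "proj U (v k) = cosine k *\<^sub>R u k" by auto
qed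

lemma inner_v_eq_cosine_inner_u:
  assumes "a \<in> U" "i < m"
  shows "a \<bullet> v i = cosine i * (a \<bullet> u i)"
  using inner_proj_left[OF subspace_U assms(1), of "v i"] proj_principal_vectors(2)[OF assms(2)]
  by (simp add: inner_commute)

lemma inner_u_eq_cosine_inner_v:
  assumes "b \<in> V" "i < m"
  shows "b \<bullet> u i = cosine i * (b \<bullet> v i)"
  using inner_proj_left[OF subspace_V assms(1), of "u i"] proj_principal_vectors(1)[OF assms(2)]
  by (simp add: inner_commute)

text \<open>The cosines decrease, so r counts the positive ones and s (below) those equal to 1.\<close>
definition r :: nat where "r = (LEAST k. \<not> (k < m \<and> 0 < cosine k))"

lemma r_le_m: "r \<le> m"
  unfolding r_def by (rule Least_le) simp

lemma cosine_pos: "k < r \<Longrightarrow> k < m \<and> 0 < cosine k"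
  unfolding r_def using not_less_Least by blast

lemma cosine_eq_0:
  assumes "r \<le> k" "k < m"
  shows "cosine k = 0"
proof -
  have "\<not> (r < m \<and> 0 < cosine r)"
    unfolding r_def by (rule LeastI[of _ m]) simp
  then show ?thesis
    using assms cosine_antimono[OF assms] cosine_nonneg[OF assms(2)] by auto
qed

lemma orthonormal_u: "orthonormal_upto r u"
  unfolding orthonormal_upto_def
proof (intro conjI allI impI)
  fix i j assume "i < r" "j < r" "i \<noteq> j"
  then have "cosine j * (u i \<bullet> u j) = 0"
    using inner_v_eq_cosine_inner_u[of "u i" j] u_orth_v[of i j] uv_feasible[of i] cosine_pos by auto
  then show "u i \<bullet> u j = 0" using cosine_pos[OF \<open>j < r\<close>] by simp
qed (use uv_feasible cosine_pos in blast)

lemma orthonormal_v: "orthonormal_upto r v"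
  unfolding orthonormal_upto_def
proof (intro conjI allI impI)
  fix i j assume "i < r" "j < r" "i \<noteq> j"
  then have "cosine j * (v i \<bullet> v j) = 0"
    using inner_u_eq_cosine_inner_v[of "v i" j] u_orth_v[of j i] uv_feasible[of i] cosine_pos
    by (auto simp: inner_commute)
  then show "v i \<bullet> v j = 0" using cosine_pos[OF \<open>j < r\<close>] by simp
qed (use uv_feasible cosine_pos in blast)

lemma u_in_U: "i < r \<Longrightarrow> u i \<in> U" and v_in_V: "i < r \<Longrightarrow> v i \<in> V"
  using uv_feasible cosine_pos by blast+

text \<open>Otherwise a and b, normalised, would be a feasible pair of positive inner product at step r,
  or, if r = m, would extend the orthonormal families u and v beyond the dimensions of U and V.\<close>
lemma inner_eq_0_if_orthogonal_principal:
  assumes a: "a \<in> U" and b: "b \<in> V" and av: "\<And>i. i < r \<Longrightarrow> a \<bullet> v i = 0"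
    and ub: "\<And>i. i < r \<Longrightarrow> u i \<bullet> b = 0"
  shows "a \<bullet> b = 0"
proof (rule ccontr)
  assume ab: "a \<bullet> b \<noteq> 0"
  then have "a \<noteq> 0" "b \<noteq> 0" by auto
  define a' where "a' = a /\<^sub>R norm a"
  define b' where "b' = (sgn (a \<bullet> b) / norm b) *\<^sub>R b"
  have a'U: "a' \<in> U" and b'V: "b' \<in> V"
    using a b subspace_U subspace_V by (simp_all add: a'_def b'_def subspace_scale)
  have na: "norm a' = 1" and nb: "norm b' = 1"
    using \<open>a \<noteq> 0\<close> \<open>b \<noteq> 0\<close> ab by (simp_all add: a'_def b'_def abs_sgn_eq)
  have "0 < a' \<bullet> b'"
    using ab \<open>a \<noteq> 0\<close> \<open>b \<noteq> 0\<close>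
    by (simp add: a'_def b'_def sgn_real_def divide_simps)
  show False
  proof (cases "r < m")
    case True
    have "a' \<bullet> b' \<le> cosine r"
      using av ub by (intro inner_le_cosine[OF True a'U b'V na nb]) (auto simp: a'_def b'_def)
    then show False using cosine_eq_0[of r] True \<open>0 < a' \<bullet> b'\<close> by simp
  next
    case False
    then have "r = m" using r_le_m by (auto simp: min_def)
    have "a' \<bullet> u i = 0" if "i < r" for i
      using inner_v_eq_cosine_inner_u[OF a, of i] av[OF that] cosine_pos[OF that] by (simp add: a'_def)
    then have "orthonormal_upto (Suc m) (u(m := a'))"
      using orthonormal_u na \<open>r = m\<close> by (intro orthonormal_upto_Suc) auto
    then have "Suc m \<le> dim U"
      by (rule orthonormal_upto_le_dim) (use a'U u_in_U \<open>r = m\<close> in \<open>auto simp: less_Suc_eq\<close>)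
    moreover have "b' \<bullet> v i = 0" if "i < r" for i
      using inner_u_eq_cosine_inner_v[OF b, of i] ub[OF that] cosine_pos[OF that]
      by (simp add: b'_def inner_commute)
    then have "orthonormal_upto (Suc m) (v(m := b'))"
      using orthonormal_v nb \<open>r = m\<close> by (intro orthonormal_upto_Suc) auto
    then have "Suc m \<le> dim V"
      by (rule orthonormal_upto_le_dim) (use b'V v_in_V \<open>r = m\<close> in \<open>auto simp: less_Suc_eq\<close>)
    ultimately show False by simp
  qed
qed

definition s :: nat where "s = (LEAST k. \<not> (k < m \<and> cosine k = 1))"

lemma s_le_r: "s \<le> r"
  unfolding s_def by (rule Least_le) (use cosine_eq_0[of r] in auto)

lemma cosine_eq_1: "k < s \<Longrightarrow> k < m \<and> cosine k = 1"
  unfolding s_def using not_less_Least by blast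

lemma cosine_s_neq_1: "\<not> (s < m \<and> cosine s = 1)"
  unfolding s_def by (rule LeastI[of _ m]) simp

lemma u_eq_v: "i < s \<Longrightarrow> u i = v i"
  using eq_scaleR_if_norm_le_inner[of "u i" 1 "v i"] uv_feasible[of i] cosine_eq_1[of i]
  by (simp add: cosine_def)

lemma u_in_Int: "i < s \<Longrightarrow> u i \<in> U \<inter> V"
  using uv_feasible[of i] u_eq_v[of i] cosine_eq_1[of i] by auto

text \<open>Otherwise x, normalised, would be a feasible pair with itself of inner product 1 at step s,
  or, if s = m, would extend the orthonormal family u beyond the dimensions of U and V.\<close>
lemma eq_0_if_orthogonal_first_s:
  assumes x: "x \<in> U \<inter> V" and xu: "\<And>i. i < s \<Longrightarrow> x \<bullet> u i = 0"
  shows "x = 0"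
proof (rule ccontr)
  assume "x \<noteq> 0"
  have orth: "orthonormal_upto s u"
    using orthonormal_upto_mono[OF orthonormal_u s_le_r] .
  define x' where "x' = x /\<^sub>R norm x"
  have x': "x' \<in> U \<inter> V" "norm x' = 1" "\<And>i. i < s \<Longrightarrow> x' \<bullet> u i = 0"
    using x xu \<open>x \<noteq> 0\<close> subspace_scale[OF subspace_inter[OF subspace_U subspace_V] x]
    by (auto simp: x'_def)
  show False
  proof (cases "s < m")
    case True
    have "x' \<bullet> x' \<le> cosine s"
      using x' u_eq_v by (intro inner_le_cosine[OF True]) (auto simp: inner_commute)
    then show False
      using cosine_le_1[OF True] cosine_s_neq_1 True x'(2) by (simp add: norm_eq_1)
  next
    case False
    then have "s = m" using s_le_r r_le_m by (auto simp: min_def)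
    have "orthonormal_upto (Suc m) (u(m := x'))"
      using orth x' \<open>s = m\<close> by (intro orthonormal_upto_Suc) auto
    then have "Suc m \<le> dim U" "Suc m \<le> dim V"
      by (rule orthonormal_upto_le_dim, use x' u_in_Int \<open>s = m\<close> in \<open>auto simp: less_Suc_eq\<close>)+
    then show False by simp
  qed
qed

lemma dim_Int_eq_s: "dim (U \<inter> V) = s"
proof -
  have orth: "orthonormal_upto s u"
    using orthonormal_upto_mono[OF orthonormal_u s_le_r] .
  have UV: "subspace (U \<inter> V)" using subspace_U subspace_V by (rule subspace_inter)
  have "w \<in> span (u ` {..<s})" if w: "w \<in> U \<inter> V" for w
  proof -
    define w' where "w' = w - (\<Sum>i<s. (w \<bullet> u i) *\<^sub>R u i)"
    have "w' \<in> U \<inter> V" "\<And>i. i < s \<Longrightarrow> w' \<bullet> u i = 0"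
      using orthonormal_residual_in_complement[OF UV orth u_in_Int w] span_base[of _ "u ` {..<s}"]
      unfolding w'_def by (auto simp: orthogonal_def inner_commute)
    then have "w' = 0" by (rule eq_0_if_orthogonal_first_s)
    then have "w = (\<Sum>i<s. (w \<bullet> u i) *\<^sub>R u i)" by (simp add: w'_def)
    also have "\<dots> \<in> span (u ` {..<s})"
      by (intro span_sum span_mul span_base) auto
    finally show ?thesis .
  qed
  then have "card (u ` {..<s}) = dim (U \<inter> V)"
    using u_in_Int independent_orthonormal_upto[OF orth] by (intro basis_card_eq_dim) auto
  then show ?thesis using card_orthonormal_upto[OF orth] by simp
qed

end

section \<open>The product of two relaxed projections\<close>

lemma replicate_mset_add: "replicate_mset (a + b) x = replicate_mset a x + replicate_mset b x"
  by (simp add: multiset_eq_iff)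

lemma pair_mset_eq_if_sum_prod_eq:
  fixes x1 y1 x2 y2 :: "'a::idom"
  assumes "x1 + y1 = x2 + y2" and "x1 * y1 = x2 * y2"
  shows "{#x1, y1#} = {#x2, y2#}"
proof -
  have "(x1 - x2) * (x1 - y2) = x1 * x1 - x1 * (x2 + y2) + x2 * y2"
    by (simp add: algebra_simps)
  also have "\<dots> = x1 * x1 - x1 * (x1 + y1) + x1 * y1"
    by (simp only: assms)
  also have "\<dots> = 0"
    by (simp add: algebra_simps)
  finally have "x1 = x2 \<or> x1 = y2" by simp
  then show ?thesis
    using assms(1) by (auto simp: add_mset_commute)
qed

locale relaxed_projection_product = principal_vector_system U V u v
  for U V :: "(real^'n) set" and u v +
  fixes \<alpha>1 \<alpha>2 :: real
begin

definition T :: "real^'n \<Rightarrow> real^'n" where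
  "T x = relaxed_proj \<alpha>2 U (relaxed_proj \<alpha>1 V x)"

lemma T_eq: "T x = ((1 - \<alpha>1) * (1 - \<alpha>2)) *\<^sub>R x + (\<alpha>1 * (1 - \<alpha>2)) *\<^sub>R proj V x
    + ((1 - \<alpha>1) * \<alpha>2) *\<^sub>R proj U x + (\<alpha>1 * \<alpha>2) *\<^sub>R proj U (proj V x)"
  unfolding T_def relaxed_proj_def
  by (simp add: proj_add proj_diff proj_scaleR subspace_U algebra_simps)

lemma linear_T: "linear T"
  by (rule linearI) (simp_all add: T_eq proj_add proj_scaleR subspace_U subspace_V algebra_simps)

lemma T_Int: "x \<in> U \<inter> V \<Longrightarrow> T x = x"
  by (simp add: T_eq proj_of_mem subspace_U subspace_V algebra_simps)

lemma T_u:
  assumes "i < m"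
  shows "T (u i) = ((1 - \<alpha>1) + \<alpha>1 * \<alpha>2 * (cosine i)\<^sup>2) *\<^sub>R u i
    + ((1 - \<alpha>2) * \<alpha>1 * cosine i) *\<^sub>R v i"
  using uv_feasible[OF assms]
  by (simp add: T_eq proj_principal_vectors[OF assms] proj_of_mem subspace_U proj_scaleR[OF subspace_U]
      algebra_simps power2_eq_square)

lemma T_v:
  assumes "i < m"
  shows "T (v i) = (\<alpha>2 * cosine i) *\<^sub>R u i + (1 - \<alpha>2) *\<^sub>R v i"
  using uv_feasible[OF assms]
  by (simp add: T_eq proj_principal_vectors[OF assms] proj_of_mem subspace_V algebra_simps)

definition U_perp :: "(real^'n) set" where
  "U_perp = {y \<in> U. \<forall>x\<in>span (u ` {..<r}). orthogonal x y}"

definition V_perp :: "(real^'n) set" where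
  "V_perp = {y \<in> V. \<forall>x\<in>span (v ` {..<r}). orthogonal x y}"

definition W :: "(real^'n) set" where
  "W = {x + y |x y. x \<in> U \<and> y \<in> V}"

definition W_perp :: "(real^'n) set" where
  "W_perp = {y. \<forall>x\<in>W. orthogonal x y}"

lemma subspace_U_perp: "subspace U_perp"
  unfolding U_perp_def using subspace_inter[OF subspace_U subspace_orthogonal_to_vectors]
  by (simp add: Int_def)

lemma subspace_V_perp: "subspace V_perp"
  unfolding V_perp_def using subspace_inter[OF subspace_V subspace_orthogonal_to_vectors]
  by (simp add: Int_def)

lemma subspace_W: "subspace W"
  unfolding W_def by (rule subspace_sums[OF subspace_U subspace_V])

lemma subspace_W_perp: "subspace W_perp"
  unfolding W_perp_def using subspace_orthogonal_to_vectors[of W] by simp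

lemma dim_U_perp: "dim U_perp + r = dim U"
proof -
  have sub: "span (u ` {..<r}) \<subseteq> U"
    by (rule span_minimal) (use u_in_U subspace_U in auto)
  then show ?thesis
    using dim_subspace_orthogonal_to_vectors[OF subspace_span subspace_U sub]
      dim_span_orthonormal_upto[OF orthonormal_u]
    unfolding U_perp_def by simp
qed

lemma dim_V_perp: "dim V_perp + r = dim V"
proof -
  have sub: "span (v ` {..<r}) \<subseteq> V"
    by (rule span_minimal) (use v_in_V subspace_V in auto)
  then show ?thesis
    using dim_subspace_orthogonal_to_vectors[OF subspace_span subspace_V sub]
      dim_span_orthonormal_upto[OF orthonormal_v]
    unfolding V_perp_def by simp
qed

lemma dim_W_perp: "dim W_perp + dim U + dim V = CARD('n) + s"
  using dim_subspace_orthogonal_to_vectors[OF subspace_W subspace_UNIV]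
    dim_sums_Int[OF subspace_U subspace_V] dim_Int_eq_s
  unfolding W_perp_def W_def by simp

lemma U_perp_orthogonal_v:
  assumes "x \<in> U_perp" "i < r"
  shows "x \<bullet> v i = 0"
proof -
  have "x \<in> U" and "u i \<bullet> x = 0"
    using assms span_base[of "u i" "u ` {..<r}"] by (auto simp: U_perp_def orthogonal_def)
  then show ?thesis
    using inner_v_eq_cosine_inner_u[of x i] cosine_pos[OF assms(2)] by (simp add: inner_commute)
qed

lemma V_perp_orthogonal_u:
  assumes "x \<in> V_perp" "i < r"
  shows "u i \<bullet> x = 0"
proof -
  have "x \<in> V" and "v i \<bullet> x = 0"
    using assms span_base[of "v i" "v ` {..<r}"] by (auto simp: V_perp_def orthogonal_def)
  then show ?thesis
    using inner_u_eq_cosine_inner_v[of x i] cosine_pos[OF assms(2)] by (simp add: inner_commute)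
qed

lemma T_U_perp:
  assumes "x \<in> U_perp"
  shows "T x = (1 - \<alpha>1) *\<^sub>R x"
proof -
  have x: "x \<in> U" using assms by (simp add: U_perp_def)
  let ?b = "proj V x"
  have "u i \<bullet> ?b = 0" if "i < r" for i
    using inner_proj_commute[OF subspace_V, of "u i" x] proj_principal_vectors(1)[of i]
      cosine_pos[OF that] U_perp_orthogonal_v[OF assms that]
    by (simp add: inner_commute)
  then have "x \<bullet> ?b = 0"
    using inner_eq_0_if_orthogonal_principal[OF x proj_in[OF subspace_V] U_perp_orthogonal_v[OF assms]]
    by blast
  then have "?b = 0"
    using inner_proj_left[OF subspace_V proj_in[OF subspace_V, of x], of x] by simp
  then show ?thesis
    by (simp add: T_eq proj_of_mem[OF subspace_U x] proj_zero subspace_U algebra_simps)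
qed

lemma T_V_perp:
  assumes "x \<in> V_perp"
  shows "T x = (1 - \<alpha>2) *\<^sub>R x"
proof -
  have x: "x \<in> V" using assms by (simp add: V_perp_def)
  let ?a = "proj U x"
  have "?a \<bullet> v i = 0" if "i < r" for i
    using inner_proj_commute[OF subspace_U, of x "v i"] proj_principal_vectors(2)[of i]
      cosine_pos[OF that] V_perp_orthogonal_u[OF assms that]
    by (simp add: inner_commute)
  then have "?a \<bullet> x = 0"
    using inner_eq_0_if_orthogonal_principal[OF proj_in[OF subspace_U] x _ V_perp_orthogonal_u[OF assms]]
    by blast
  then have "?a = 0"
    using inner_proj_left[OF subspace_U proj_in[OF subspace_U, of x], of x] by (simp add: inner_commute)
  then show ?thesis
    by (simp add: T_eq proj_of_mem[OF subspace_V x] algebra_simps)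
qed

lemma T_W_perp:
  assumes "x \<in> W_perp"
  shows "T x = ((1 - \<alpha>1) * (1 - \<alpha>2)) *\<^sub>R x"
proof -
  have UV_W: "U \<subseteq> W" "V \<subseteq> W"
    unfolding W_def using subspace_0[OF subspace_U] subspace_0[OF subspace_V] by force+
  have orth: "x \<bullet> y = 0" if "y \<in> W" for y
    using assms that inner_commute[of x y] by (simp add: W_perp_def orthogonal_def)
  have "proj U x = 0"
    by (rule proj_eq_0_if_orthogonal[OF subspace_U]) (use orth UV_W in auto)
  moreover have "proj V x = 0"
    by (rule proj_eq_0_if_orthogonal[OF subspace_V]) (use orth UV_W in auto)
  ultimately show ?thesis by (simp add: T_eq proj_zero subspace_U)
qed

lemma subspace_eq_UNIV_if_principal_parts:
  assumes C: "subspace C"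
    and "\<And>i. i < r \<Longrightarrow> u i \<in> C" and "\<And>i. i < r \<Longrightarrow> v i \<in> C"
    and "U_perp \<subseteq> C" and "V_perp \<subseteq> C" and "W_perp \<subseteq> C"
  shows "C = UNIV"
proof -
  have "a \<in> C" if "a \<in> U" for a
  proof -
    have "a = (a - (\<Sum>i<r. (a \<bullet> u i) *\<^sub>R u i)) + (\<Sum>i<r. (a \<bullet> u i) *\<^sub>R u i)" by simp
    also have "\<dots> \<in> C"
      using orthonormal_residual_in_complement[OF subspace_U orthonormal_u u_in_U that] assms
      by (intro subspace_add[OF C] subspace_sum[OF C] subspace_scale[OF C]) (auto simp: U_perp_def)
    finally show ?thesis .
  qed
  moreover have "b \<in> C" if "b \<in> V" for b
  proof -
    have "b = (b - (\<Sum>i<r. (b \<bullet> v i) *\<^sub>R v i)) + (\<Sum>i<r. (b \<bullet> v i) *\<^sub>R v i)" by simp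
    also have "\<dots> \<in> C"
      using orthonormal_residual_in_complement[OF subspace_V orthonormal_v v_in_V that] assms
      by (intro subspace_add[OF C] subspace_sum[OF C] subspace_scale[OF C]) (auto simp: V_perp_def)
    finally show ?thesis .
  qed
  ultimately have WC: "W \<subseteq> C"
    unfolding W_def using subspace_add[OF C] by blast
  have "x \<in> C" for x
  proof -
    obtain y z where "y \<in> span W" "\<And>w. w \<in> span W \<Longrightarrow> orthogonal z w" "x = y + z"
      using orthogonal_subspace_decomp_exists[of W x] by blast
    moreover from this have "z \<in> W_perp"
      unfolding W_perp_def using span_base by (force simp: orthogonal_commute)
    moreover have "y \<in> W"
      using \<open>y \<in> span W\<close> subspace_W[THEN span_eq_iff[THEN iffD2]] by simp
    ultimately show ?thesis
      using WC assms(6) subspace_add[OF C] by blast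
  qed
  then show ?thesis by auto
qed

definition A :: "complex^'n^'n" where "A = complex_matrix (matrix T)"

lemma A_complex_vector: "A *v complex_vector x = complex_vector (T x)"
  unfolding A_def complex_matrix_mult_complex_vector
  using matrix_works[OF linear_matrix_vector_mul_eq[THEN iffD2, OF linear_T]] by simp

definition block_trace :: "nat \<Rightarrow> complex" where
  "block_trace i = complex_of_real (2 - \<alpha>1 - \<alpha>2 + \<alpha>1 * \<alpha>2 * (cos (principal_angle u v i))\<^sup>2)"

definition block_det :: complex where
  "block_det = complex_of_real ((1 - \<alpha>1) * (1 - \<alpha>2))"

definition lam1 :: "nat \<Rightarrow> complex" where
  "lam1 i = block_trace i / 2 + csqrt ((block_trace i / 2)\<^sup>2 - block_det)"

definition lam2 :: "nat \<Rightarrow> complex" where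
  "lam2 i = block_trace i / 2 - csqrt ((block_trace i / 2)\<^sup>2 - block_det)"

lemma lam1_add_lam2: "lam1 i + lam2 i = block_trace i"
  by (simp add: lam1_def lam2_def)

lemma lam1_mult_lam2: "lam1 i * lam2 i = block_det"
proof -
  have "lam1 i * lam2 i = (block_trace i / 2)\<^sup>2 - (csqrt ((block_trace i / 2)\<^sup>2 - block_det))\<^sup>2"
    unfolding lam1_def lam2_def by (simp add: power2_eq_square algebra_simps)
  then show ?thesis by simp
qed

lemma block_trace_eq:
  "i < m \<Longrightarrow> block_trace i = complex_of_real (2 - \<alpha>1 - \<alpha>2 + \<alpha>1 * \<alpha>2 * (cosine i)\<^sup>2)"
  using cosine_nonneg[of i] cosine_le_1[of i]
  by (simp add: block_trace_def principal_angle_def cosine_def)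

lemma triangularizes_principal_plane:
  assumes "i < m"
  shows "\<exists>zs. triangularizes A zs \<and> map snd zs = [lam1 i, lam2 i] \<and>
           {complex_vector (u i), complex_vector (v i)} \<subseteq> vec.span (fst ` set zs)"
proof (rule triangularizes_invariant_plane)
  let ?a = "(1 - \<alpha>1) + \<alpha>1 * \<alpha>2 * (cosine i)\<^sup>2" and ?d = "(1 - \<alpha>2) * \<alpha>1 * cosine i"
    and ?b = "\<alpha>2 * cosine i" and ?e = "1 - \<alpha>2"
  show "A *v complex_vector (u i) = complex_of_real ?a *s complex_vector (u i) + complex_of_real ?d *s complex_vector (v i)"
    by (simp add: A_complex_vector T_u[OF assms])
  show "A *v complex_vector (v i) = complex_of_real ?b *s complex_vector (u i) + complex_of_real ?e *s complex_vector (v i)"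
    by (simp add: A_complex_vector T_v[OF assms])
  show "lam1 i + lam2 i = complex_of_real ?a + complex_of_real ?e"
    unfolding lam1_add_lam2 block_trace_eq[OF assms] by simp
  have "(1 - \<alpha>1) * (1 - \<alpha>2) = ?a * ?e - ?b * ?d"
    by (simp add: power2_eq_square algebra_simps)
  then show "lam1 i * lam2 i = complex_of_real ?a * complex_of_real ?e - complex_of_real ?b * complex_of_real ?d"
    by (simp only: lam1_mult_lam2 block_det_def of_real_mult[symmetric] of_real_diff[symmetric])
qed

lemma lam_pair_if_cosine_0:
  assumes "r \<le> i" "i < m"
  shows "{#lam1 i, lam2 i#} = {#complex_of_real (1 - \<alpha>1), complex_of_real (1 - \<alpha>2)#}"
  using cosine_eq_0[OF assms] lam1_add_lam2[of i] lam1_mult_lam2[of i] block_trace_eq[OF assms(2)]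
  by (intro pair_mset_eq_if_sum_prod_eq) (simp_all add: block_det_def)

lemma triangularizes_principal_planes:
  "\<exists>bs. triangularizes A bs \<and> mset (map snd bs) = (\<Sum>i\<in>{s..<r}. {#lam1 i, lam2 i#}) \<and>
     (\<forall>i\<in>{s..<r}. {complex_vector (u i), complex_vector (v i)} \<subseteq> vec.span (fst ` set bs))"
proof -
  obtain B where B: "\<And>i. i < m \<Longrightarrow> triangularizes A (B i) \<and> map snd (B i) = [lam1 i, lam2 i] \<and>
      {complex_vector (u i), complex_vector (v i)} \<subseteq> vec.span (fst ` set (B i))"
    using triangularizes_principal_plane by metis
  define bs where "bs = concat (map B [s..<r])"
  have rm: "i \<in> {s..<r} \<Longrightarrow> i < m" for i using r_le_m by simp
  have "triangularizes A bs"
    unfolding bs_def using B rm by (intro triangularizes_concat) auto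
  moreover have "mset (map snd bs) = (\<Sum>i\<in>{s..<r}. {#lam1 i, lam2 i#})"
  proof -
    have "mset (map snd bs) = (\<Sum>i\<leftarrow>[s..<r]. mset (map snd (B i)))"
      by (simp add: bs_def map_concat mset_concat o_def)
    also have "\<dots> = (\<Sum>i\<leftarrow>[s..<r]. {#lam1 i, lam2 i#})"
      by (intro arg_cong[where f=sum_list] map_cong) (use B rm in \<open>auto simp del: mset_map\<close>)
    also have "\<dots> = (\<Sum>i\<in>{s..<r}. {#lam1 i, lam2 i#})"
      by (simp add: sum_set_upt_conv_sum_list_nat[symmetric])
    finally show ?thesis .
  qed
  moreover have "{complex_vector (u i), complex_vector (v i)} \<subseteq> vec.span (fst ` set bs)"
    if "i \<in> {s..<r}" for i
  proof -
    have "vec.span (fst ` set (B i)) \<subseteq> vec.span (fst ` set bs)"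
      using that by (intro vec.span_mono image_mono) (auto simp: bs_def)
    then show ?thesis using B[OF rm[OF that]] by (meson order_trans)
  qed
  ultimately show ?thesis by blast
qed

lemma vec_span_eq_UNIV_if_principal_parts:
  assumes "\<And>i. i < r \<Longrightarrow> {complex_vector (u i), complex_vector (v i)} \<subseteq> vec.span Z"
    and "complex_vector ` (U_perp \<union> V_perp \<union> W_perp) \<subseteq> vec.span Z"
  shows "vec.span Z = UNIV"
proof (rule vec_span_eq_UNIV_if_complex_vectors)
  have "{x. complex_vector x \<in> vec.span Z} = UNIV"
    using assms by (intro subspace_eq_UNIV_if_principal_parts subspace_complex_vector_preimage) auto
  then show "complex_vector x \<in> vec.span Z" for x by auto
qed

lemma triangularizes_T_eigenspace:
  assumes "subspace S" and "\<And>x. x \<in> S \<Longrightarrow> T x = l *\<^sub>R x"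
  shows "\<exists>zs. triangularizes A zs \<and> map snd zs = replicate (dim S) (complex_of_real l) \<and>
           complex_vector ` S \<subseteq> vec.span (fst ` set zs)"
  using assms by (intro triangularizes_eigenbasis_exists) (simp_all add: A_complex_vector)

lemma triangularizes_eigenspaces:
  "\<exists>es. triangularizes A es \<and>
     mset (map snd es) = replicate_mset s 1 + replicate_mset (dim W_perp) block_det
       + replicate_mset (dim V_perp) (complex_of_real (1 - \<alpha>2))
       + replicate_mset (dim U_perp) (complex_of_real (1 - \<alpha>1)) \<and>
     complex_vector ` (U \<inter> V \<union> W_perp \<union> V_perp \<union> U_perp) \<subseteq> vec.span (fst ` set es)"
proof -
  obtain e1 where e1: "triangularizes A e1" "map snd e1 = replicate s 1"
    "complex_vector ` (U \<inter> V) \<subseteq> vec.span (fst ` set e1)"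
    using triangularizes_T_eigenspace[of "U \<inter> V" 1] subspace_inter[OF subspace_U subspace_V] T_Int
      dim_Int_eq_s
    by auto
  obtain e2 where e2: "triangularizes A e2" "map snd e2 = replicate (dim W_perp) block_det"
    "complex_vector ` W_perp \<subseteq> vec.span (fst ` set e2)"
    using triangularizes_T_eigenspace[OF subspace_W_perp T_W_perp] by (auto simp: block_det_def)
  obtain e3 where e3: "triangularizes A e3"
    "map snd e3 = replicate (dim V_perp) (complex_of_real (1 - \<alpha>2))"
    "complex_vector ` V_perp \<subseteq> vec.span (fst ` set e3)"
    using triangularizes_T_eigenspace[OF subspace_V_perp T_V_perp] by auto
  obtain e4 where e4: "triangularizes A e4"
    "map snd e4 = replicate (dim U_perp) (complex_of_real (1 - \<alpha>1))"
    "complex_vector ` U_perp \<subseteq> vec.span (fst ` set e4)"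
    using triangularizes_T_eigenspace[OF subspace_U_perp T_U_perp] by auto
  define es where "es = e1 @ e2 @ e3 @ e4"
  have mono: "vec.span (fst ` set xs) \<subseteq> vec.span (fst ` set es)" if "set xs \<subseteq> set es" for xs
    using that by (intro vec.span_mono image_mono)
  have "complex_vector ` (U \<inter> V) \<subseteq> vec.span (fst ` set es)"
    by (rule order_trans[OF e1(3) mono]) (auto simp: es_def)
  moreover have "complex_vector ` W_perp \<subseteq> vec.span (fst ` set es)"
    by (rule order_trans[OF e2(3) mono]) (auto simp: es_def)
  moreover have "complex_vector ` V_perp \<subseteq> vec.span (fst ` set es)"
    by (rule order_trans[OF e3(3) mono]) (auto simp: es_def)
  moreover have "complex_vector ` U_perp \<subseteq> vec.span (fst ` set es)"
    by (rule order_trans[OF e4(3) mono]) (auto simp: es_def)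
  ultimately have "complex_vector ` (U \<inter> V \<union> W_perp \<union> V_perp \<union> U_perp) \<subseteq> vec.span (fst ` set es)"
    by (simp add: image_Un)
  moreover have "triangularizes A es"
    unfolding es_def using e1 e2 e3 e4 by (intro triangularizes_append)
  moreover have "mset (map snd es) = replicate_mset s 1 + replicate_mset (dim W_perp) block_det
       + replicate_mset (dim V_perp) (complex_of_real (1 - \<alpha>2))
       + replicate_mset (dim U_perp) (complex_of_real (1 - \<alpha>1))"
    unfolding es_def map_append mset_append e1(2) e2(2) e3(2) e4(2) by (simp add: add.assoc)
  ultimately show ?thesis by blast
qed

lemma triangularizing_list_exists:
  "\<exists>zs. triangularizes A zs \<and> vec.span (fst ` set zs) = UNIV \<and>
     mset (map snd zs) = replicate_mset s 1 + replicate_mset (dim W_perp) block_det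
       + replicate_mset (dim V_perp) (complex_of_real (1 - \<alpha>2))
       + replicate_mset (dim U_perp) (complex_of_real (1 - \<alpha>1))
       + (\<Sum>i\<in>{s..<r}. {#lam1 i, lam2 i#})"
proof -
  obtain es where es: "triangularizes A es"
    "mset (map snd es) = replicate_mset s 1 + replicate_mset (dim W_perp) block_det
       + replicate_mset (dim V_perp) (complex_of_real (1 - \<alpha>2))
       + replicate_mset (dim U_perp) (complex_of_real (1 - \<alpha>1))"
    "complex_vector ` (U \<inter> V \<union> W_perp \<union> V_perp \<union> U_perp) \<subseteq> vec.span (fst ` set es)"
    using triangularizes_eigenspaces by blast
  obtain bs where bs: "triangularizes A bs" "mset (map snd bs) = (\<Sum>i\<in>{s..<r}. {#lam1 i, lam2 i#})"
    "\<And>i. i \<in> {s..<r} \<Longrightarrow> {complex_vector (u i), complex_vector (v i)} \<subseteq> vec.span (fst ` set bs)"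
    using triangularizes_principal_planes by blast
  define zs where "zs = es @ bs"
  have es_zs: "vec.span (fst ` set es) \<subseteq> vec.span (fst ` set zs)"
    and bs_zs: "vec.span (fst ` set bs) \<subseteq> vec.span (fst ` set zs)"
    by (intro vec.span_mono image_mono, simp add: zs_def)+
  have eigen: "complex_vector ` (U \<inter> V \<union> W_perp \<union> V_perp \<union> U_perp) \<subseteq> vec.span (fst ` set zs)"
    using es(3) es_zs by (rule order_trans)
  have "vec.span (fst ` set zs) = UNIV"
  proof (rule vec_span_eq_UNIV_if_principal_parts)
    show "complex_vector ` (U_perp \<union> V_perp \<union> W_perp) \<subseteq> vec.span (fst ` set zs)"
      by (rule order_trans[OF _ eigen]) auto
    show "{complex_vector (u i), complex_vector (v i)} \<subseteq> vec.span (fst ` set zs)" if "i < r" for i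
    proof (cases "i < s")
      case True
      then have "complex_vector (u i) \<in> vec.span (fst ` set zs)"
        using eigen u_in_Int by blast
      then show ?thesis using u_eq_v[OF True] by simp
    next
      case False
      then show ?thesis using bs(3)[of i] bs_zs \<open>i < r\<close> by auto
    qed
  qed
  moreover have "triangularizes A zs"
    unfolding zs_def using es bs by (intro triangularizes_append)
  ultimately show ?thesis
    unfolding zs_def using es(2) bs(2) by auto
qed

lemma has_eigenvalues_T:
  "has_eigenvalues_mset T
     (replicate_mset s 1 + replicate_mset (s + CARD('n) - dim U - dim V) block_det
      + replicate_mset (dim V - dim U) (complex_of_real (1 - \<alpha>2))
      + replicate_mset (dim U - dim V) (complex_of_real (1 - \<alpha>1))
      + (\<Sum>i\<in>{s..<m}. {#lam1 i, lam2 i#}))"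
proof -
  obtain zs where zs: "triangularizes A zs" "vec.span (fst ` set zs) = UNIV"
    "mset (map snd zs) = replicate_mset s 1 + replicate_mset (dim W_perp) block_det
       + replicate_mset (dim V_perp) (complex_of_real (1 - \<alpha>2))
       + replicate_mset (dim U_perp) (complex_of_real (1 - \<alpha>1))
       + (\<Sum>i\<in>{s..<r}. {#lam1 i, lam2 i#})"
    using triangularizing_list_exists by blast
  have dims: "dim U_perp = (dim U - dim V) + (m - r)" "dim V_perp = (dim V - dim U) + (m - r)"
    "dim W_perp = s + CARD('n) - dim U - dim V"
    using dim_U_perp dim_V_perp dim_W_perp r_le_m by auto
  have "length zs = size (mset (map snd zs))" by simp
  also have "\<dots> = CARD('n)"
    using zs(3) dim_U_perp dim_V_perp dim_W_perp s_le_r by simp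
  finally have "charpoly (matrix T) = (\<Prod>l\<in>#mset (map snd zs). [:- l, 1:])"
    using det_char_matrix_triangularizes[OF _ zs(2,1)] by (simp add: charpoly_eq_det_char_matrix A_def)
  moreover have "(\<Sum>i\<in>{r..<m}. {#lam1 i, lam2 i#})
      = replicate_mset (m - r) (complex_of_real (1 - \<alpha>1)) + replicate_mset (m - r) (complex_of_real (1 - \<alpha>2))"
    by (simp add: lam_pair_if_cosine_0 multiset_eq_iff count_sum)
  then have "(\<Sum>i\<in>{s..<m}. {#lam1 i, lam2 i#}) = (\<Sum>i\<in>{s..<r}. {#lam1 i, lam2 i#})
      + replicate_mset (m - r) (complex_of_real (1 - \<alpha>1)) + replicate_mset (m - r) (complex_of_real (1 - \<alpha>2))"
    using sum.atLeastLessThan_concat[OF s_le_r r_le_m, of "\<lambda>i. {#lam1 i, lam2 i#}"]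
    by (simp add: add.assoc)
  ultimately show ?thesis
    unfolding has_eigenvalues_mset_def zs(3) dims by (simp add: replicate_mset_add ac_simps)
qed

end

theorem theorem1:
  fixes U V :: "(real^'n) set" and \<alpha>1 \<alpha>2 :: real
    and u v :: "nat \<Rightarrow> real^'n"
  assumes "subspace U" and "subspace V"
    and "principal_vectors U V u v"
  shows "let n = CARD('n); p = dim U; q = dim V; s = dim (U \<inter> V);
             \<theta> = principal_angle u v;
             b = (\<lambda>i. complex_of_real (2 - \<alpha>1 - \<alpha>2 + \<alpha>1 * \<alpha>2 * (cos (\<theta> i))\<^sup>2));
             c = complex_of_real ((1 - \<alpha>1) * (1 - \<alpha>2));
             lam1 = (\<lambda>i. b i / 2 + csqrt ((b i / 2)\<^sup>2 - c));
             lam2 = (\<lambda>i. b i / 2 - csqrt ((b i / 2)\<^sup>2 - c))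
         in has_eigenvalues_mset (\<lambda>x. relaxed_proj \<alpha>2 U (relaxed_proj \<alpha>1 V x))
              (replicate_mset s 1
               + replicate_mset (s + n - p - q) c
               + replicate_mset (q - p) (complex_of_real (1 - \<alpha>2))
               + replicate_mset (p - q) (complex_of_real (1 - \<alpha>1))
               + (\<Sum>i\<in>{s..<min p q}. {#lam1 i, lam2 i#}))"
proof -
  interpret relaxed_projection_product U V u v \<alpha>1 \<alpha>2
    by unfold_locales (fact assms)+
  show ?thesis
    using has_eigenvalues_T
    unfolding Let_def T_def[abs_def] dim_Int_eq_s lam1_def lam2_def block_trace_def block_det_def .
qed

end
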